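(* Let $\mu$ be a shift-ergodic measure with full support on $Q^{\mathbb{Z}}$ and $F$ a cellular automaton over $Q$ admitting a word $w$ as a wall. Then for every word $v\in Q^*$: $v\in L_\mu(F)$ if and only if there exist integers $t,p\geq1$ and words $v_1,v_2,u$ such that $F^t\big({}^\omega(wu)^\omega\big)={}^\omega(v_1vv_2)^\omega$ and $F^p\big({}^\omega(v_1vv_2)^\omega\big)={}^\omega(v_1vv_2)^\omega$.
   Context: A CA $F$ over finite alphabet $Q$ has radius $r$, local rule $\delta$, global map $F(c)_z=\delta(c_{z-r},\dots,c_{z+r})$. $[u]_i=\{c:c_{[i,i+|u|-1]}=u\}$. $L_\mu(F)=\{u:\mu(F^{-t}([u]_0))\not\to0\}$. ${}^\omega x^\omega$ denotes the bi-infinite configuration obtained by repeating the word $x$ periodically. $\mu$ is shift-ergodic if it is shift-invariant and every shift-invariant measurable set has measure 0 or 1; full support means $\mu([u]_0)>0$ for all words $u$. A word $w$ is a wall for $F$ if for all $c,c'\in[w]_0$: (1) if $c_z=c'_z$ for all $z<0$ then $F^t(c)_z=F^t(c')_z$ for all $z<0$ and $t\ge1$; (2) if $c_z=c'_z$ for all $z\ge|w|$ then $F^t(c)_z=F^t(c')_z$ for all $z\ge|w|$ and $t\ge1$. *)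

theory Defs
  imports "HOL-Probability.Probability"
begin

type_synonym 'q config = "int \<Rightarrow> 'q"

definition config_space :: "'q config measure" where
  "config_space = PiM UNIV (\<lambda>_. count_space UNIV)"

definition global_map :: "nat \<Rightarrow> ('q list \<Rightarrow> 'q) \<Rightarrow> 'q config \<Rightarrow> 'q config" where
  "global_map r \<delta> c = (\<lambda>z. \<delta> (map (\<lambda>i. c (z + i)) [- int r..int r]))"

definition cyl :: "'q list \<Rightarrow> int \<Rightarrow> 'q config set" where
  "cyl u i = {c. \<forall>k < length u. c (i + int k) = u ! k}"

definition shift :: "'q config \<Rightarrow> 'q config" where
  "shift c = (\<lambda>z. c (z + 1))"

definition shift_invariant :: "'q config measure \<Rightarrow> bool" where
  "shift_invariant \<mu> \<longleftrightarrow>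
     (\<forall>A \<in> sets \<mu>. measure \<mu> (shift -` A \<inter> space \<mu>) = measure \<mu> A)"

definition shift_ergodic :: "'q config measure \<Rightarrow> bool" where
  "shift_ergodic \<mu> \<longleftrightarrow> shift_invariant \<mu> \<and>
     (\<forall>A \<in> sets \<mu>. shift -` A \<inter> space \<mu> = A \<longrightarrow> measure \<mu> A = 0 \<or> measure \<mu> A = 1)"

definition full_support :: "'q config measure \<Rightarrow> bool" where
  "full_support \<mu> \<longleftrightarrow> (\<forall>u. measure \<mu> (cyl u 0) > 0)"

definition L_mu :: "'q config measure \<Rightarrow> ('q config \<Rightarrow> 'q config) \<Rightarrow> 'q list set" where
  "L_mu \<mu> F = {u. \<not> ((\<lambda>t. measure \<mu> ((F ^^ t) -` cyl u 0 \<inter> space \<mu>)) \<longlonglongrightarrow> 0)}"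

text \<open>The bi-infinite periodic configuration ^omega x ^omega (x nonempty),
  with x placed starting at cell 0.\<close>
definition periodic_config :: "'q list \<Rightarrow> 'q config" where
  "periodic_config x = (\<lambda>z. x ! nat (z mod int (length x)))"

definition is_wall :: "('q config \<Rightarrow> 'q config) \<Rightarrow> 'q list \<Rightarrow> bool" where
  "is_wall F w \<longleftrightarrow>
     (\<forall>c \<in> cyl w 0. \<forall>c' \<in> cyl w 0.
        ((\<forall>z < 0. c z = c' z) \<longrightarrow>
           (\<forall>t \<ge> 1. \<forall>z < 0. (F ^^ t) c z = (F ^^ t) c' z)) \<and>
        ((\<forall>z \<ge> int (length w). c z = c' z) \<longrightarrow>
           (\<forall>t \<ge> 1. \<forall>z \<ge> int (length w). (F ^^ t) c z = (F ^^ t) c' z)))"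

end

theory Submission
  imports Defs
begin

text \<open>A wall cuts the line into independent pieces: between two occurrences of w the orbit of
  a configuration depends only on the segment between them, so there it is the orbit of the
  spatially periodic configuration repeating that segment, and such orbits are eventually
  periodic. Ergodicity and full support make w occur on both sides of the window [0, |v|) almost
  surely, within a distance that is bounded outside a set of small measure. If the measure of
  F^-t [v] does not tend to 0, a time t beyond the preperiods of the finitely many short periodic
  configurations therefore yields the witness. Conversely, given a witness, F^(t+kp) shows v at a
  fixed position on the cylinder of N periods of wu followed by w, for every k, and that cylinder
  has positive measure.\<close>

section \<open>Configuration space and translations\<close>

lemma space_config_space [simp]: "space config_space = UNIV"
  unfolding config_space_def by (simp add: space_PiM)

lemma sets_config_space_coordinate: "{c::'q config. c j = a} \<in> sets config_space"
proof -
  have "(\<lambda>c::'q config. c j) \<in> config_space \<rightarrow>\<^sub>M count_space UNIV"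
    unfolding config_space_def by simp
  from measurable_sets[OF this, of "{a}"] show ?thesis
    by (simp add: vimage_def)
qed

lemma sets_config_space_finitely_determined:
  fixes P :: "('q::finite) config \<Rightarrow> bool"
  assumes "finite J" and "\<And>c c'. (\<forall>j\<in>J. c j = c' j) \<Longrightarrow> P c \<longleftrightarrow> P c'"
  shows "{c. P c} \<in> sets config_space"
proof -
  have agree: "{c::'q config. \<forall>j\<in>J. c j = g j} \<in> sets config_space" for g
    using sets.sets_Collect_countable_All'[of J config_space "\<lambda>j c. c j = g j"]
    by (simp add: sets_config_space_coordinate)
  have union: "{c. P c} = (\<Union>g\<in>(\<lambda>c. restrict c J) ` {c. P c}. {c. \<forall>j\<in>J. c j = g j})"
    using assms(2) by auto
  have "finite ((\<lambda>c. restrict c J) ` {c. P c})"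
    by (rule finite_subset[of _ "PiE J (\<lambda>_. UNIV)"]) (auto intro: finite_PiE assms(1))
  then show ?thesis
    by (subst union) (rule sets.finite_UN[OF _ agree])
qed

lemma sets_cyl: "cyl u i \<in> sets (config_space :: ('q::finite) config measure)"
  unfolding cyl_def
  by (rule sets_config_space_finitely_determined[of "(\<lambda>k. i + int k) ` {..<length u}"]) auto

lemma measurable_global_map:
  "global_map r \<delta> \<in> config_space \<rightarrow>\<^sub>M (config_space :: ('q::finite) config measure)"
  unfolding config_space_def
proof (rule measurable_PiM_single)
  fix A i
  have "{c::'q config. global_map r \<delta> c i \<in> A} \<in> sets config_space"
    by (rule sets_config_space_finitely_determined[of "(\<lambda>k. i + k) ` set [- int r..int r]"])
      (auto simp: global_map_def intro!: arg_cong[where f="\<lambda>x. \<delta> x \<in> A"] map_cong)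
  then show "{c \<in> space (PiM UNIV (\<lambda>_. count_space UNIV)). global_map r \<delta> c i \<in> A}
      \<in> sets (PiM UNIV (\<lambda>_. count_space (UNIV :: 'q set)))"
    by (simp add: config_space_def space_PiM)
qed (auto simp: space_PiM)

lemma measurable_global_map_funpow:
  "global_map r \<delta> ^^ n \<in> config_space \<rightarrow>\<^sub>M (config_space :: ('q::finite) config measure)"
proof (induction n)
  case (Suc n)
  then show ?case
    unfolding funpow.simps by (rule measurable_comp[OF _ measurable_global_map])
qed simp

lemma global_map_translate:
  "global_map r \<delta> (\<lambda>z. c (z + k)) = (\<lambda>z. global_map r \<delta> c (z + k))"
  unfolding global_map_def by (simp add: algebra_simps)

lemma funpow_global_map_translate:
  "(global_map r \<delta> ^^ n) (\<lambda>z. c (z + k)) = (\<lambda>z. (global_map r \<delta> ^^ n) c (z + k))"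
  by (induction n) (simp_all add: global_map_translate)

lemma translate_in_cyl: "(\<lambda>z. c (z + k)) \<in> cyl u i \<longleftrightarrow> c \<in> cyl u (i + k)"
  unfolding cyl_def by (simp add: algebra_simps)

lemma shift_in_cyl: "shift c \<in> cyl u i \<longleftrightarrow> c \<in> cyl u (i + 1)"
  unfolding shift_def by (rule translate_in_cyl)

lemma shift_vimage_cyl: "shift -` cyl u i = cyl u (i + 1)"
  using shift_in_cyl by blast

section \<open>Walls\<close>

lemma wall_left_determined:
  assumes "is_wall (global_map r \<delta>) w" and "c \<in> cyl w a" "c' \<in> cyl w a"
    and "\<forall>z<a. c z = c' z" and "t \<ge> 1" and "z < a"
  shows "(global_map r \<delta> ^^ t) c z = (global_map r \<delta> ^^ t) c' z"
proof -
  have "(\<lambda>z. c (z + a)) \<in> cyl w 0" "(\<lambda>z. c' (z + a)) \<in> cyl w 0"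
    using assms(2,3) by (simp_all add: translate_in_cyl)
  note wall = assms(1)[unfolded is_wall_def, rule_format, OF this, THEN conjunct1, rule_format]
  have "(global_map r \<delta> ^^ t) (\<lambda>z. c (z + a)) (z - a) = (global_map r \<delta> ^^ t) (\<lambda>z. c' (z + a)) (z - a)"
    by (rule wall) (use assms(4,5,6) in simp_all)
  then show ?thesis
    by (simp add: funpow_global_map_translate)
qed

lemma wall_right_determined:
  assumes "is_wall (global_map r \<delta>) w" and "c \<in> cyl w a" "c' \<in> cyl w a"
    and "\<forall>z\<ge>a + int (length w). c z = c' z" and "t \<ge> 1" and "z \<ge> a + int (length w)"
  shows "(global_map r \<delta> ^^ t) c z = (global_map r \<delta> ^^ t) c' z"
proof -
  have "(\<lambda>z. c (z + a)) \<in> cyl w 0" "(\<lambda>z. c' (z + a)) \<in> cyl w 0"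
    using assms(2,3) by (simp_all add: translate_in_cyl)
  note wall = assms(1)[unfolded is_wall_def, rule_format, OF this, THEN conjunct2, rule_format]
  have "(global_map r \<delta> ^^ t) (\<lambda>z. c (z + a)) (z - a) = (global_map r \<delta> ^^ t) (\<lambda>z. c' (z + a)) (z - a)"
    by (rule wall) (use assms(4,5,6) in \<open>simp_all add: add.commute\<close>)
  then show ?thesis
    by (simp add: funpow_global_map_translate)
qed

text \<open>The configuration equal to c left of a and to c' from a on agrees with c' to the right
  of the wall at a and with c to the left of the wall at b.\<close>
lemma funpow_global_map_between_walls:
  assumes W: "is_wall (global_map r \<delta>) w"
    and c: "c \<in> cyl w a" "c \<in> cyl w b" and c': "c' \<in> cyl w a" "c' \<in> cyl w b"
    and agree: "\<forall>z. a \<le> z \<and> z < b + int (length w) \<longrightarrow> c z = c' z"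
    and t: "t \<ge> 1" and z: "a + int (length w) \<le> z" "z < b"
  shows "(global_map r \<delta> ^^ t) c z = (global_map r \<delta> ^^ t) c' z"
proof -
  define e where "e = (\<lambda>z. if a \<le> z then c' z else c z)"
  have ea: "e \<in> cyl w a" and eb: "e \<in> cyl w b"
    using c' c(2) unfolding e_def cyl_def by auto
  have "(global_map r \<delta> ^^ t) e z = (global_map r \<delta> ^^ t) c' z"
    by (rule wall_right_determined[OF W ea c'(1) _ t z(1)]) (auto simp: e_def)
  moreover have "(global_map r \<delta> ^^ t) e z = (global_map r \<delta> ^^ t) c z"
    by (rule wall_left_determined[OF W eb c(2) _ t z(2)]) (use agree in \<open>auto simp: e_def\<close>)
  ultimately show ?thesis
    by simp
qed

section \<open>Spatially periodic configurations\<close>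

definition has_period :: "int \<Rightarrow> 'q config \<Rightarrow> bool" where
  "has_period P y \<longleftrightarrow> (\<forall>z. y (z + P) = y z)"

lemma has_period_periodic_config: "s \<noteq> [] \<Longrightarrow> has_period (int (length s)) (periodic_config s)"
  unfolding has_period_def periodic_config_def by simp

lemma has_period_add_mult:
  assumes "has_period P y"
  shows "y (z + k * P) = y z"
proof (induction k rule: int_induct[where k=0])
  case (step1 i)
  then show ?case
    using assms[unfolded has_period_def, rule_format, of "z + i * P"] by (simp add: algebra_simps)
next
  case (step2 i)
  then show ?case
    using assms[unfolded has_period_def, rule_format, of "z + (i - 1) * P"] by (simp add: algebra_simps)
qed simp

lemma has_period_mod: "has_period P y \<Longrightarrow> y (z mod P) = y z"
  using has_period_add_mult[of P y "z mod P" "z div P"] by simp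

lemma has_period_mult: "has_period P y \<Longrightarrow> has_period (k * P) y"
  using has_period_add_mult unfolding has_period_def[of "k * P"] by blast

lemma has_period_funpow_global_map:
  assumes "has_period P y"
  shows "has_period P ((global_map r \<delta> ^^ n) y)"
proof -
  have "(\<lambda>z. y (z + P)) = y"
    using assms by (simp add: has_period_def)
  then have "(\<lambda>z. (global_map r \<delta> ^^ n) y (z + P)) = (global_map r \<delta> ^^ n) y"
    by (subst funpow_global_map_translate[symmetric]) simp
  then show ?thesis
    by (simp add: has_period_def fun_eq_iff)
qed

lemma periodic_config_nth: "i < length q \<Longrightarrow> periodic_config q (int i) = q ! i"
  unfolding periodic_config_def by simp

lemma periodic_config_of_period:
  assumes "P > 0" and "has_period (int P) y"
  shows "y = periodic_config (map (\<lambda>i. y (int i)) [0..<P])"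
proof
  fix z
  have "0 \<le> z mod int P" "z mod int P < int P"
    using assms(1) by simp_all
  then show "y z = periodic_config (map (\<lambda>i. y (int i)) [0..<P]) z"
    using has_period_mod[OF assms(2), of z] unfolding periodic_config_def by (simp add: nat_less_iff)
qed

lemma finite_has_period:
  assumes "P > 0"
  shows "finite {y :: ('q::finite) config. has_period (int P) y}"
proof (rule finite_subset)
  show "{y :: 'q config. has_period (int P) y} \<subseteq> periodic_config ` {q. length q = P}"
    using periodic_config_of_period[OF assms] by (auto simp: image_iff intro!: exI[of _ "map _ [0..<P]"])
  show "finite (periodic_config ` {q :: 'q list. length q = P})"
    using finite_lists_length_eq[of "UNIV :: 'q set" P] by simp
qed

lemma periodic_config_split_at_occurrence:
  assumes "L > 0" and "has_period (int L) y" and "y \<in> cyl v (int i)"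
  shows "\<exists>v1 v2. v1 @ v @ v2 \<noteq> [] \<and> y = periodic_config (v1 @ v @ v2)"
proof -
  define P where "P = L * (i + length v + 1)"
  define q where "q = map (\<lambda>j. y (int j)) [0..<P]"
  have "1 * (i + length v + 1) \<le> L * (i + length v + 1)"
    using assms(1) by (intro mult_le_mono1) simp
  then have P: "i + length v < P"
    unfolding P_def by simp
  have "has_period (int P) y"
    using has_period_mult[OF assms(2), of "int (i + length v + 1)"] by (simp add: P_def algebra_simps)
  then have "y = periodic_config q"
    unfolding q_def using P by (intro periodic_config_of_period) simp_all
  moreover have "take (length v) (drop i q) = v"
    using P assms(3) by (intro nth_equalityI) (simp_all add: q_def cyl_def)
  then have split: "take i q @ v @ drop (i + length v) q = q"
    using append_take_drop_id[of i q] append_take_drop_id[of "length v" "drop i q"]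
    by (simp add: add.commute)
  ultimately have "y = periodic_config (take i q @ v @ drop (i + length v) q)"
    by (simp only:)
  moreover have "take i q @ v @ drop (i + length v) q \<noteq> []"
    unfolding split q_def using P by simp
  ultimately show ?thesis
    by blast
qed

lemma eventually_periodic_funpow:
  fixes f :: "'a \<Rightarrow> 'a"
  assumes "finite (range (\<lambda>n. (f ^^ n) x))"
  shows "eventually (\<lambda>t. \<exists>p\<ge>1. (f ^^ (t + p)) x = (f ^^ t) x) sequentially"
proof -
  have "\<not> inj (\<lambda>n. (f ^^ n) x)"
    using assms finite_imageD infinite_UNIV_nat by blast
  then obtain m n where "m < n" and eq: "(f ^^ m) x = (f ^^ n) x"
    unfolding inj_def by (metis linorder_neqE_nat)
  have "(f ^^ (t + (n - m))) x = (f ^^ t) x" if "m \<le> t" for t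
  proof -
    have "(f ^^ (t + (n - m))) x = (f ^^ (t - m)) ((f ^^ n) x)"
      using \<open>m < n\<close> that funpow_add[of "t - m" n f] by (simp add: algebra_simps)
    also have "\<dots> = (f ^^ t) x"
      using that funpow_add[of "t - m" m f] by (simp flip: eq)
    finally show ?thesis .
  qed
  then show ?thesis
    using \<open>m < n\<close> unfolding eventually_sequentially
    by (intro exI[of _ m] allI impI exI[of _ "n - m"]) simp_all
qed

lemma eventually_periodic_global_map_orbit:
  fixes x :: "('q::finite) config"
  assumes "P > 0" and "has_period (int P) x"
  shows "eventually (\<lambda>t. \<exists>p\<ge>1. (global_map r \<delta> ^^ (t + p)) x = (global_map r \<delta> ^^ t) x) sequentially"
  using assms has_period_funpow_global_map
  by (intro eventually_periodic_funpow finite_subset[OF _ finite_has_period]) auto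

lemma eventually_periodic_global_map_orbits:
  "eventually (\<lambda>t. \<forall>s :: ('q::finite) list. s \<noteq> [] \<and> length s \<le> n \<longrightarrow>
      (\<exists>p\<ge>1. (global_map r \<delta> ^^ (t + p)) (periodic_config s) = (global_map r \<delta> ^^ t) (periodic_config s)))
    sequentially"
proof -
  let ?S = "{s :: 'q list. s \<noteq> [] \<and> length s \<le> n}"
  have "finite ?S"
    by (rule finite_subset[OF _ finite_lists_length_le[of "UNIV :: 'q set" n]]) auto
  moreover have "\<forall>s\<in>?S. eventually (\<lambda>t. \<exists>p\<ge>1. (global_map r \<delta> ^^ (t + p)) (periodic_config s)
      = (global_map r \<delta> ^^ t) (periodic_config s)) sequentially"
    using has_period_periodic_config
    by (blast intro: eventually_periodic_global_map_orbit[of "length s" for s])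
  ultimately have "eventually (\<lambda>t. \<forall>s\<in>?S. \<exists>p\<ge>1. (global_map r \<delta> ^^ (t + p)) (periodic_config s)
      = (global_map r \<delta> ^^ t) (periodic_config s)) sequentially"
    by (rule eventually_ball_finite)
  then show ?thesis
    by (rule eventually_mono) simp
qed

lemma periodic_config_in_cyl_prefix:
  assumes "w @ u \<noteq> []"
  shows "periodic_config (w @ u) \<in> cyl w (int k * int (length (w @ u)))"
proof -
  have "periodic_config (w @ u) (int k * int (length (w @ u)) + int i) = w ! i" if "i < length w" for i
    using has_period_add_mult[OF has_period_periodic_config[OF assms], of "int i" "int k"]
      periodic_config_nth[of i "w @ u"] that
    by (simp add: nth_append add.commute)
  then show ?thesis
    unfolding cyl_def by simp
qed

section \<open>Configurations reaching a cycle\<close>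

definition reaches_cycle_containing :: "('q config \<Rightarrow> 'q config) \<Rightarrow> 'q list \<Rightarrow> 'q list \<Rightarrow> bool" where
  "reaches_cycle_containing F w v \<longleftrightarrow>
     (\<exists>t p :: nat. \<exists>v1 v2 u. t \<ge> 1 \<and> p \<ge> 1 \<and> w @ u \<noteq> [] \<and> v1 @ v @ v2 \<noteq> [] \<and>
       (F ^^ t) (periodic_config (w @ u)) = periodic_config (v1 @ v @ v2) \<and>
       (F ^^ p) (periodic_config (v1 @ v @ v2)) = periodic_config (v1 @ v @ v2))"

text \<open>The position |v1| + |w| |q| lies between the two walls and is congruent to |v1| modulo
  the period |q| of F^n((wu)^omega).\<close>
lemma funpow_global_map_from_periodic_prefix:
  assumes W: "is_wall (global_map r \<delta>) w"
    and s: "s = w @ u" "s \<noteq> []" and q: "q = v1 @ v @ v2" "q \<noteq> []"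
    and n: "n \<ge> 1" "(global_map r \<delta> ^^ n) (periodic_config s) = periodic_config q"
    and N: "length v1 + length w * length q + length v \<le> N * length s"
    and c: "\<forall>k < N * length s + length w. c (int k) = periodic_config s (int k)"
  shows "(global_map r \<delta> ^^ n) c \<in> cyl v (int (length v1 + length w * length q))"
proof -
  let ?x = "periodic_config s" and ?L = "int (N * length s)"
  have x: "?x \<in> cyl w 0" "?x \<in> cyl w ?L"
    using periodic_config_in_cyl_prefix[of w u 0] periodic_config_in_cyl_prefix[of w u N] s by auto
  have agree: "\<forall>z. 0 \<le> z \<and> z < ?L + int (length w) \<longrightarrow> c z = ?x z"
    using c by (metis nat_0_le nat_less_iff of_nat_add)
  have c_walls: "c \<in> cyl w 0" "c \<in> cyl w ?L"
    using x agree unfolding cyl_def by (auto simp del: of_nat_mult)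
  have "length w \<le> length w * length q"
    using q(2) by (simp add: Suc_le_eq)
  have "(global_map r \<delta> ^^ n) c (int (length v1 + length w * length q) + int k) = v ! k"
    if "k < length v" for k
  proof -
    let ?z = "int (length v1 + length w * length q + k)"
    have "length w \<le> length v1 + length w * length q + k"
      using \<open>length w \<le> length w * length q\<close> by linarith
    then have z1: "0 + int (length w) \<le> ?z"
      by (simp only: add_0_left of_nat_le_iff)
    have "length v1 + length w * length q + k < N * length s"
      using N that by linarith
    then have z2: "?z < ?L"
      by (simp only: of_nat_less_iff)
    have "(global_map r \<delta> ^^ n) c ?z = (global_map r \<delta> ^^ n) ?x ?z"
      using funpow_global_map_between_walls[OF W c_walls x agree n(1) z1 z2] by simp
    also have "\<dots> = periodic_config q (int (length v1 + k) + int (length w) * int (length q))"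
      using n(2) by (simp add: algebra_simps)
    also have "\<dots> = periodic_config q (int (length v1 + k))"
      by (rule has_period_add_mult[OF has_period_periodic_config[OF q(2)]])
    also have "\<dots> = v ! k"
      using periodic_config_nth[of "length v1 + k" q] that q(1) by (simp add: nth_append)
    finally show ?thesis
      by (simp add: add.assoc)
  qed
  then show ?thesis
    unfolding cyl_def by simp
qed

text \<open>Repeating the segment of c between its walls at 0 and L gives a spatially periodic
  configuration whose image under F^t agrees with that of c between the walls.\<close>
lemma reaches_cycle_containing_of_walls:
  fixes c :: "'q config"
  assumes W: "is_wall (global_map r \<delta>) w"
    and walls: "c \<in> cyl w 0" "c \<in> cyl w (int L)"
    and i: "length w \<le> i" "i + length v < L"
    and t: "t \<ge> 1" "(global_map r \<delta> ^^ t) c \<in> cyl v (int i)"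
    and cycle: "\<exists>p\<ge>1. (global_map r \<delta> ^^ (t + p)) (periodic_config (map (\<lambda>k. c (int k)) [0..<L]))
        = (global_map r \<delta> ^^ t) (periodic_config (map (\<lambda>k. c (int k)) [0..<L]))"
  shows "reaches_cycle_containing (global_map r \<delta>) w v"
proof -
  let ?F = "global_map r \<delta>"
  define s where "s = map (\<lambda>k. c (int k)) [0..<L]"
  define x where "x = periodic_config s"
  have L: "L > 0" "length s = L"
    using i unfolding s_def by simp_all
  have x_c_period: "x z = c z" if "0 \<le> z" "z < int L" for z
    using that periodic_config_nth[of "nat z" s] L unfolding x_def s_def by simp
  have x_c: "x z = c z" if "0 \<le> z" "z < int L + int (length w)" for z
  proof (cases "z < int L")
    case False
    then have k: "nat (z - int L) < length w" "int (nat (z - int L)) = z - int L"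
      using that by auto
    have "x z = x (z - int L)"
      using has_period_add_mult[OF has_period_periodic_config, of s "z - int L" 1] L
      unfolding x_def by auto
    also have "\<dots> = c (z - int L)"
      using False that i by (intro x_c_period) auto
    also have "\<dots> = w ! nat (z - int L)"
      using walls(1) k unfolding cyl_def by force
    also have "\<dots> = c z"
      using walls(2) k unfolding cyl_def by force
    finally show ?thesis .
  qed (use that x_c_period in simp)
  then have x_walls: "x \<in> cyl w 0" "x \<in> cyl w (int L)"
    using walls i unfolding cyl_def by auto
  define y where "y = (?F ^^ t) x"
  have "y \<in> cyl v (int i)"
    unfolding cyl_def
  proof (intro CollectI allI impI)
    fix k assume "k < length v"
    have "y (int i + int k) = (?F ^^ t) c (int i + int k)"
      unfolding y_def
      by (rule funpow_global_map_between_walls[OF W x_walls walls _ t(1)])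
        (use x_c i \<open>k < length v\<close> in auto)
    then show "y (int i + int k) = v ! k"
      using t(2) \<open>k < length v\<close> unfolding cyl_def by simp
  qed
  moreover have "has_period (int L) y"
    unfolding y_def x_def using has_period_funpow_global_map[OF has_period_periodic_config, of s] L
    by force
  ultimately obtain v1 v2 where q: "v1 @ v @ v2 \<noteq> []" "y = periodic_config (v1 @ v @ v2)"
    using periodic_config_split_at_occurrence L(1) by blast
  obtain p where p: "p \<ge> 1" "(?F ^^ (t + p)) x = y"
    using cycle unfolding y_def x_def s_def by blast
  have "(?F ^^ p) y = (?F ^^ (p + t)) x"
    unfolding y_def funpow_add by simp
  also have "\<dots> = y"
    using p(2) by (simp add: add.commute)
  finally have "(?F ^^ p) (periodic_config (v1 @ v @ v2)) = periodic_config (v1 @ v @ v2)"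
    using q(2) by simp
  moreover have "take (length w) s = w"
    using walls(1) i unfolding s_def cyl_def by (intro nth_equalityI) simp_all
  then have "s = w @ drop (length w) s"
    by (metis append_take_drop_id)
  moreover have "(?F ^^ t) (periodic_config s) = periodic_config (v1 @ v @ v2)"
    using q(2) unfolding y_def x_def .
  ultimately show ?thesis
    unfolding reaches_cycle_containing_def using t(1) p(1) q(1) L
    by (metis length_greater_0_conv)
qed

section \<open>Shift-invariant measures\<close>

lemma int_set_unbounded_above:
  fixes S :: "int set"
  assumes "z0 \<in> S" and "\<And>z. z \<in> S \<Longrightarrow> \<exists>z'\<in>S. z < z'"
  shows "\<exists>z\<in>S. B < z"
proof (rule ccontr)
  assume "\<not> (\<exists>z\<in>S. B < z)"
  then have bounded: "z \<le> B" if "z \<in> S" for z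
    using that by (simp add: not_less)
  define T where "T = S \<inter> {z0..B}"
  have "finite T"
    unfolding T_def by simp
  moreover have "z0 \<in> T"
    using assms(1) bounded[OF assms(1)] unfolding T_def by simp
  ultimately have "Max T \<in> T"
    by (intro Max_in) auto
  then obtain z' where "z' \<in> S" "Max T < z'"
    using assms(2) unfolding T_def by blast
  moreover have "z0 \<le> Max T"
    using \<open>Max T \<in> T\<close> unfolding T_def by simp
  ultimately have "z' \<in> T"
    using bounded[OF \<open>z' \<in> S\<close>] unfolding T_def by simp
  then show False
    using Max_ge[OF \<open>finite T\<close>] \<open>Max T < z'\<close> by (simp add: not_le[symmetric])
qed

lemma int_set_unbounded_below:
  fixes S :: "int set"
  assumes "z0 \<in> S" and "\<And>z. z \<in> S \<Longrightarrow> \<exists>z'\<in>S. z' < z"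
  shows "\<exists>z\<in>S. z < B"
proof -
  have "\<exists>z'\<in>uminus ` S. z < z'" if z: "z \<in> uminus ` S" for z
  proof -
    obtain y where "y \<in> S" "z = - y"
      using z by blast
    moreover obtain y' where "y' \<in> S" "y' < y"
      using assms(2)[OF \<open>y \<in> S\<close>] by blast
    ultimately show ?thesis
      by force
  qed
  then obtain z where "z \<in> uminus ` S" "- B < z"
    using int_set_unbounded_above[of "- z0" "uminus ` S"] assms(1) by blast
  then show ?thesis
    by auto
qed

definition walls_around :: "'q list \<Rightarrow> nat \<Rightarrow> nat \<Rightarrow> 'q config set" where
  "walls_around w m n = {c. \<exists>a b. - int n \<le> a \<and> a + int (length w) \<le> 0 \<and> int m < b \<and> b \<le> int n
     \<and> c \<in> cyl w a \<and> c \<in> cyl w b}"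

lemma incseq_walls_around: "incseq (walls_around w m)"
proof (rule incseq_SucI, rule subsetI)
  fix n c assume "c \<in> walls_around w m n"
  then obtain a b where "- int n \<le> a" "a + int (length w) \<le> 0" "int m < b" "b \<le> int n"
    "c \<in> cyl w a" "c \<in> cyl w b"
    unfolding walls_around_def by blast
  then show "c \<in> walls_around w m (Suc n)"
    unfolding walls_around_def by (intro CollectI exI[of _ a] exI[of _ b]) simp
qed

lemma walls_around_in_sets:
  "walls_around w m n \<in> sets (config_space :: ('q::finite) config measure)"
  unfolding walls_around_def
proof (rule sets_config_space_finitely_determined[of "{- int n..<int n + int (length w)}"])
  fix c c' :: "'q config"
  assume "\<forall>j\<in>{- int n..<int n + int (length w)}. c j = c' j"
  then have cyl_iff: "c \<in> cyl w a \<longleftrightarrow> c' \<in> cyl w a" if "- int n \<le> a" "a \<le> int n" for a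
    using that unfolding cyl_def by auto
  have "(- int n \<le> a \<and> a + int (length w) \<le> 0 \<and> int m < b \<and> b \<le> int n \<and> c \<in> cyl w a \<and> c \<in> cyl w b) \<longleftrightarrow>
      (- int n \<le> a \<and> a + int (length w) \<le> 0 \<and> int m < b \<and> b \<le> int n \<and> c' \<in> cyl w a \<and> c' \<in> cyl w b)"
    for a b
    using cyl_iff[of a] cyl_iff[of b] by force
  then show "(\<exists>a b. - int n \<le> a \<and> a + int (length w) \<le> 0 \<and> int m < b \<and> b \<le> int n \<and> c \<in> cyl w a \<and> c \<in> cyl w b) \<longleftrightarrow>
      (\<exists>a b. - int n \<le> a \<and> a + int (length w) \<le> 0 \<and> int m < b \<and> b \<le> int n \<and> c' \<in> cyl w a \<and> c' \<in> cyl w b)"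
    by blast
qed simp

lemma not_tendsto_0_frequently_ge:
  fixes f :: "nat \<Rightarrow> real"
  assumes "\<not> f \<longlonglongrightarrow> 0" and "\<And>n. 0 \<le> f n"
  obtains \<epsilon> where "\<epsilon> > 0" and "frequently (\<lambda>n. \<epsilon> \<le> f n) sequentially"
proof -
  have "\<forall>l<0. eventually (\<lambda>n. l < f n) sequentially"
    using assms(2) by (auto intro: always_eventually less_le_trans)
  then have "\<not> (\<forall>u>0. eventually (\<lambda>n. f n < u) sequentially)"
    using assms(1) unfolding order_tendsto_iff by blast
  then obtain u where "u > 0" "\<not> eventually (\<lambda>n. f n < u) sequentially"
    by blast
  then show ?thesis
    using that by (simp add: not_eventually not_less)
qed

locale shift_invariant_prob = prob_space \<mu> for \<mu> :: "('q::finite) config measure" +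
  assumes sets_eq: "sets \<mu> = sets config_space"
    and shift_inv: "shift_invariant \<mu>"
begin

lemma space_eq [simp]: "space \<mu> = UNIV"
  using sets_eq_imp_space_eq[OF sets_eq] by simp

lemma cyl_in_events [simp]: "cyl u i \<in> events"
  using sets_eq sets_cyl by blast

lemma vimage_funpow_global_map_in_events:
  assumes "A \<in> events"
  shows "(global_map r \<delta> ^^ n) -` A \<in> events"
proof -
  have "global_map r \<delta> ^^ n \<in> \<mu> \<rightarrow>\<^sub>M \<mu>"
    using measurable_global_map_funpow measurable_cong_sets[OF sets_eq sets_eq] by blast
  from measurable_sets[OF this assms] show ?thesis
    by simp
qed

lemma prob_translates_eq:
  fixes D :: "int \<Rightarrow> 'q config set"
  assumes "\<And>z. D z \<in> events" and "\<And>z. shift -` D z = D (z + 1)"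
  shows "prob (D z) = prob (D 0)"
proof -
  have step: "prob (D (z + 1)) = prob (D z)" for z
    using shift_inv assms unfolding shift_invariant_def by (metis space_eq Int_UNIV_right)
  show ?thesis
  proof (induction z rule: int_induct[where k=0])
    case (step1 i)
    then show ?case
      using step[of i] by simp
  next
    case (step2 i)
    then show ?case
      using step[of "i - 1"] by simp
  qed simp
qed

lemma prob_cyl_translate: "prob (cyl u i) = prob (cyl u 0)"
  using prob_translates_eq[of "cyl u"] by (simp add: shift_vimage_cyl)

lemma disjoint_translates_null:
  fixes D :: "int \<Rightarrow> 'q config set"
  assumes "\<And>z. D z \<in> events" and "\<And>z. shift -` D z = D (z + 1)"
    and "\<And>z z'. z \<noteq> z' \<Longrightarrow> D z \<inter> D z' = {}"
  shows "D z \<in> null_sets \<mu>"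
proof -
  have eq: "prob (D z) = prob (D 0)" for z
    by (rule prob_translates_eq[where D=D]) (rule assms)+
  have bound: "real n * prob (D 0) \<le> 1" for n
  proof -
    have "prob (\<Union>i<n. D (int i)) = (\<Sum>i<n. prob (D (int i)))"
      using assms(1,3) by (intro finite_measure_finite_Union) (auto simp: disjoint_family_on_def)
    then show ?thesis
      using prob_le_1[of "\<Union>i<n. D (int i)"] eq[of "int _"] by simp
  qed
  have "prob (D 0) = 0"
  proof (rule ccontr)
    assume "prob (D 0) \<noteq> 0"
    then obtain n where "1 < real n * prob (D 0)"
      using ex_less_of_nat_mult[of "prob (D 0)" 1] measure_nonneg[of \<mu> "D 0"] by force
    then show False
      using bound[of n] by simp
  qed
  then show ?thesis
    using assms(1) eq[of z] by (intro null_setsI) (simp_all add: emeasure_eq_measure)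
qed

text \<open>With R instantiated to < or >, the configurations having a last (resp. first)
  occurrence of u at z are disjoint translates of each other, hence null.\<close>
lemma AE_no_extremal_occurrence:
  assumes "\<And>z z'. R (z + 1) (z' + 1) \<longleftrightarrow> R z z'" and "\<And>z z'. z \<noteq> z' \<Longrightarrow> R z z' \<or> R z' z"
  shows "AE c in \<mu>. \<forall>z. c \<in> cyl u z \<longrightarrow> (\<exists>z'. R z z' \<and> c \<in> cyl u z')"
proof -
  define D where "D z = {c. c \<in> cyl u z \<and> (\<forall>z'. R z z' \<longrightarrow> c \<notin> cyl u z')}" for z
  have "UNIV \<in> events"
    using sets.top[of \<mu>] by simp
  then have "cyl u z \<inter> (\<Inter>z'\<in>{z'. R z z'}. UNIV - cyl u z') \<in> events" for z
    by (intro sets.Int sets.countable_INT'') auto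
  moreover have "D z = cyl u z \<inter> (\<Inter>z'\<in>{z'. R z z'}. UNIV - cyl u z')" for z
    unfolding D_def by blast
  ultimately have events: "D z \<in> events" for z
    by simp
  have shift_D: "shift -` D z = D (z + 1)" for z
  proof -
    have quant: "(\<forall>z'. R z z' \<longrightarrow> c \<notin> cyl u (z' + 1)) \<longleftrightarrow> (\<forall>z'. R (z + 1) z' \<longrightarrow> c \<notin> cyl u z')" for c
    proof (intro iffI allI impI)
      fix z' assume h: "\<forall>z'. R z z' \<longrightarrow> c \<notin> cyl u (z' + 1)" and "R (z + 1) z'"
      then have "R z (z' - 1)"
        using assms(1)[of z "z' - 1"] by simp
      then show "c \<notin> cyl u z'"
        using h by fastforce
    next
      fix z' assume "\<forall>z'. R (z + 1) z' \<longrightarrow> c \<notin> cyl u z'" "R z z'"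
      then show "c \<notin> cyl u (z' + 1)"
        using assms(1)[of z z'] by blast
    qed
    show ?thesis
      by (rule set_eqI) (simp only: D_def mem_Collect_eq vimage_eq shift_in_cyl quant)
  qed
  have disjoint: "D z \<inter> D z' = {}" if "z \<noteq> z'" for z z'
    using assms(2)[OF that] unfolding D_def by blast
  have "D z \<in> null_sets \<mu>" for z
    by (intro disjoint_translates_null[where D=D] events shift_D disjoint)
  then have "AE c in \<mu>. \<forall>z. c \<notin> D z"
    by (intro AE_all_countable[THEN iffD2] allI AE_not_in)
  then show ?thesis
    by eventually_elim (auto simp: D_def)
qed

lemma AE_occurrences_unbounded:
  assumes "shift_ergodic \<mu>" and "full_support \<mu>"
  shows "AE c in \<mu>. \<forall>B. (\<exists>z>B. c \<in> cyl w z) \<and> (\<exists>z<B. c \<in> cyl w z)"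
proof -
  define A where "A = (\<Union>z. cyl w z)"
  have "A \<in> events"
    unfolding A_def by (intro sets.countable_UN'') auto
  moreover have "shift -` A = A"
  proof -
    have "(\<Union>z. cyl w (z + 1)) = A"
      unfolding A_def by (auto intro!: exI[of _ "_ - 1"])
    then show ?thesis
      unfolding A_def vimage_UN shift_vimage_cyl by simp
  qed
  moreover have "prob A \<ge> prob (cyl w 0)"
    using \<open>A \<in> events\<close> by (intro finite_measure_mono) (auto simp: A_def)
  moreover have "prob (cyl w 0) > 0"
    using assms(2) unfolding full_support_def by blast
  ultimately have "prob A = 1"
    using assms(1) unfolding shift_ergodic_def by force
  then have "AE c in \<mu>. c \<in> A"
    using \<open>A \<in> events\<close> by (simp add: prob_eq_1)
  moreover have "AE c in \<mu>. \<forall>z. c \<in> cyl w z \<longrightarrow> (\<exists>z'. z < z' \<and> c \<in> cyl w z')"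
    by (rule AE_no_extremal_occurrence) auto
  moreover have "AE c in \<mu>. \<forall>z. c \<in> cyl w z \<longrightarrow> (\<exists>z'. z' < z \<and> c \<in> cyl w z')"
    by (rule AE_no_extremal_occurrence) auto
  ultimately show ?thesis
  proof eventually_elim
    case (elim c)
    then obtain z0 where "z0 \<in> {z. c \<in> cyl w z}"
      unfolding A_def by auto
    then show ?case
      using int_set_unbounded_above[of z0 "{z. c \<in> cyl w z}"]
        int_set_unbounded_below[of z0 "{z. c \<in> cyl w z}"] elim(2,3)
      by blast
  qed
qed

lemma walls_around_in_events [simp]: "walls_around w m n \<in> events"
  using walls_around_in_sets sets_eq by blast

lemma prob_walls_around_tendsto_1:
  assumes "shift_ergodic \<mu>" and "full_support \<mu>"
  shows "(\<lambda>n. prob (walls_around w m n)) \<longlonglongrightarrow> 1"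
proof -
  have "AE c in \<mu>. c \<in> (\<Union>n. walls_around w m n)"
    using AE_occurrences_unbounded[OF assms, of w]
  proof eventually_elim
    case (elim c)
    then obtain a b where "a < 1 - int (length w)" "c \<in> cyl w a" "int m < b" "c \<in> cyl w b"
      by blast
    then have "c \<in> walls_around w m (nat (max b (- a)))"
      unfolding walls_around_def by (intro CollectI exI[of _ a] exI[of _ b]) auto
    then show ?case
      by blast
  qed
  then have "prob (\<Union>n. walls_around w m n) = 1"
    by (subst prob_eq_1) auto
  moreover have "(\<lambda>n. prob (walls_around w m n)) \<longlonglongrightarrow> prob (\<Union>n. walls_around w m n)"
    by (rule finite_Lim_measure_incseq) (auto simp: incseq_walls_around)
  ultimately show ?thesis
    by simp
qed

lemma in_L_mu_if_reaches_cycle_containing: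
  assumes W: "is_wall (global_map r \<delta>) w" and "full_support \<mu>"
    and "reaches_cycle_containing (global_map r \<delta>) w v"
  shows "v \<in> L_mu \<mu> (global_map r \<delta>)"
proof -
  let ?F = "global_map r \<delta>"
  obtain t p v1 v2 u where tp: "t \<ge> 1" "p \<ge> 1" and ne: "w @ u \<noteq> []" "v1 @ v @ v2 \<noteq> []"
    and reach: "(?F ^^ t) (periodic_config (w @ u)) = periodic_config (v1 @ v @ v2)"
    and cycle: "(?F ^^ p) (periodic_config (v1 @ v @ v2)) = periodic_config (v1 @ v @ v2)"
    using assms(3) unfolding reaches_cycle_containing_def by blast
  define s q where "s = w @ u" and "q = v1 @ v @ v2"
  define j where "j = length v1 + length w * length q"
  define N where "N = j + length v"
  define X where "X = map (\<lambda>i. periodic_config s (int i)) [0..<N * length s + length w]"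
  have reach_later: "(?F ^^ (t + k * p)) (periodic_config s) = periodic_config q" for k
  proof (induction k)
    case (Suc k)
    then show ?case
      using cycle funpow_add[of p "t + k * p" ?F] by (simp add: s_def q_def add.left_commute)
  qed (use reach in \<open>simp add: s_def q_def\<close>)
  have N: "j + length v \<le> N * length s"
    using ne(1) unfolding N_def s_def by (simp add: Suc_le_eq)
  have "cyl X (- int j) \<subseteq> (?F ^^ (t + k * p)) -` cyl v 0" for k
  proof
    fix d assume "d \<in> cyl X (- int j)"
    then have "\<forall>i < N * length s + length w. d (int i + - int j) = periodic_config s (int i)"
      unfolding X_def cyl_def by simp
    then have "(?F ^^ (t + k * p)) (\<lambda>z. d (z + - int j)) \<in> cyl v (int j)"
      unfolding j_def
      by (intro funpow_global_map_from_periodic_prefix[OF W s_def _ q_def _ _ reach_later])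
        (use ne tp N in \<open>simp_all add: s_def q_def j_def\<close>)
    then show "d \<in> (?F ^^ (t + k * p)) -` cyl v 0"
      unfolding funpow_global_map_translate translate_in_cyl by simp
  qed
  then have lower: "prob (cyl X (- int j)) \<le> prob ((?F ^^ (t + k * p)) -` cyl v 0 \<inter> space \<mu>)" for k
    by (intro finite_measure_mono) (auto simp: vimage_funpow_global_map_in_events)
  have pos: "prob (cyl X (- int j)) > 0"
    using assms(2) prob_cyl_translate[of X "- int j"] unfolding full_support_def by simp
  show ?thesis
    unfolding L_mu_def
  proof (intro CollectI notI)
    assume "(\<lambda>t. prob ((?F ^^ t) -` cyl v 0 \<inter> space \<mu>)) \<longlonglongrightarrow> 0"
    then have "eventually (\<lambda>n. prob ((?F ^^ n) -` cyl v 0 \<inter> space \<mu>) < prob (cyl X (- int j))) sequentially"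
      using pos by (rule order_tendstoD(2))
    then obtain M where "\<And>n. n \<ge> M \<Longrightarrow> prob ((?F ^^ n) -` cyl v 0 \<inter> space \<mu>) < prob (cyl X (- int j))"
      unfolding eventually_sequentially by blast
    moreover have "M \<le> t + M * p"
      using tp(2) by (simp add: trans_le_add2)
    ultimately show False
      using lower[of M] by (meson not_le)
  qed
qed

lemma reaches_cycle_containing_if_in_L_mu:
  assumes "shift_ergodic \<mu>" and "full_support \<mu>" and W: "is_wall (global_map r \<delta>) w"
    and "v \<in> L_mu \<mu> (global_map r \<delta>)"
  shows "reaches_cycle_containing (global_map r \<delta>) w v"
proof -
  let ?F = "global_map r \<delta>"
  let ?P = "\<lambda>t. (?F ^^ t) -` cyl v 0 \<inter> space \<mu>"
  obtain \<epsilon> where "\<epsilon> > 0" and often: "frequently (\<lambda>t. \<epsilon> \<le> prob (?P t)) sequentially"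
    using assms(4) unfolding L_mu_def by (auto elim: not_tendsto_0_frequently_ge)
  have "eventually (\<lambda>n. 1 - \<epsilon> < prob (walls_around w (length v) n)) sequentially"
    using \<open>\<epsilon> > 0\<close> by (intro order_tendstoD(1)[OF prob_walls_around_tendsto_1[OF assms(1,2)]]) simp
  then obtain n where n: "prob (walls_around w (length v) n) > 1 - \<epsilon>"
    unfolding eventually_sequentially by (meson order_refl)
  have "eventually (\<lambda>t. t \<ge> 1 \<and> (\<forall>s. s \<noteq> [] \<and> length s \<le> 2 * n \<longrightarrow>
      (\<exists>p\<ge>1. (?F ^^ (t + p)) (periodic_config s) = (?F ^^ t) (periodic_config s)))) sequentially"
    by (intro eventually_conj eventually_ge_at_top eventually_periodic_global_map_orbits)
  then obtain t where "\<epsilon> \<le> prob (?P t)" and "t \<ge> 1"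
    and periodic: "\<forall>s. s \<noteq> [] \<and> length s \<le> 2 * n \<longrightarrow>
      (\<exists>p\<ge>1. (?F ^^ (t + p)) (periodic_config s) = (?F ^^ t) (periodic_config s))"
    using frequently_ex[OF frequently_eventually_frequently[OF often]] by blast
  have "walls_around w (length v) n \<inter> ?P t \<noteq> {}"
  proof
    assume "walls_around w (length v) n \<inter> ?P t = {}"
    then have "prob (walls_around w (length v) n) + prob (?P t) \<le> 1"
      using finite_measure_Union[of "walls_around w (length v) n" "?P t"]
        prob_le_1[of "walls_around w (length v) n \<union> ?P t"]
      by (simp add: vimage_funpow_global_map_in_events)
    then show False
      using n \<open>\<epsilon> \<le> prob (?P t)\<close> by simp
  qed
  then obtain c a b where c: "(?F ^^ t) c \<in> cyl v 0"
    and ab: "- int n \<le> a" "a + int (length w) \<le> 0" "int (length v) < b" "b \<le> int n"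
      "c \<in> cyl w a" "c \<in> cyl w b"
    unfolding walls_around_def by blast
  define c0 where "c0 = (\<lambda>z. c (z + a))"
  show ?thesis
  proof (rule reaches_cycle_containing_of_walls[OF W, of c0 "nat (b - a)" "nat (- a)"])
    show "c0 \<in> cyl w 0" "c0 \<in> cyl w (int (nat (b - a)))"
      using ab unfolding c0_def by (simp_all add: translate_in_cyl)
    show "(?F ^^ t) c0 \<in> cyl v (int (nat (- a)))"
      using ab c unfolding c0_def by (simp add: funpow_global_map_translate translate_in_cyl)
    show "\<exists>p\<ge>1. (?F ^^ (t + p)) (periodic_config (map (\<lambda>k. c0 (int k)) [0..<nat (b - a)]))
        = (?F ^^ t) (periodic_config (map (\<lambda>k. c0 (int k)) [0..<nat (b - a)]))"
      using periodic ab by simp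
  qed (use ab \<open>t \<ge> 1\<close> in auto)
qed

end

theorem proposition1:
  fixes \<mu> :: "('q::finite) config measure"
    and r :: nat and \<delta> :: "'q list \<Rightarrow> 'q" and w :: "'q list"
  assumes "prob_space \<mu>"
    and "sets \<mu> = sets config_space"
    and "shift_ergodic \<mu>"
    and "full_support \<mu>"
    and "is_wall (global_map r \<delta>) w"
  shows "v \<in> L_mu \<mu> (global_map r \<delta>) \<longleftrightarrow>
    (\<exists>t p :: nat. \<exists>v1 v2 u :: 'q list. t \<ge> 1 \<and> p \<ge> 1 \<and>
       w @ u \<noteq> [] \<and> v1 @ v @ v2 \<noteq> [] \<and>
       (global_map r \<delta> ^^ t) (periodic_config (w @ u)) = periodic_config (v1 @ v @ v2) \<and>
       (global_map r \<delta> ^^ p) (periodic_config (v1 @ v @ v2)) = periodic_config (v1 @ v @ v2))"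
proof -
  interpret shift_invariant_prob \<mu>
    using assms(1-3) unfolding shift_ergodic_def
    by (intro shift_invariant_prob.intro shift_invariant_prob_axioms.intro) auto
  show ?thesis
    using reaches_cycle_containing_if_in_L_mu[OF assms(3-5)]
      in_L_mu_if_reaches_cycle_containing[OF assms(5,4)]
    unfolding reaches_cycle_containing_def by blast
qed

end
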